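(* For every positive integer $n$ and every $T\in\mathrm{TSPP}_{n-1}$, the partition $\pi(T)$ is a modified balanced partition of size $n$.
   Context: For a partition $\lambda$ with conjugate $\lambda'$ and Durfee square side $l=\max\{i:\lambda_i\ge i\}$, its Frobenius notation is $(\lambda_1-1,\ldots,\lambda_l-l\mid \lambda'_1-1,\ldots,\lambda'_l-l)$. A modified balanced partition of size $n$ is a partition $\lambda=(\lambda_1,\ldots,\lambda_n)$ with $n$ parts, zero parts allowed, such that $\lambda_1\le n-1$ and $\lambda_i<\lambda'_i$ whenever $\lambda_i\ge i$. A plane partition inside an $(m,m,m)$-box is an array $(T_{i,j})_{1\le i,j\le m}$ of integers in $\{0,\ldots,m\}$ weakly decreasing along rows and columns; equivalently the set $\{(i,j,k):k\le T_{i,j}\}\subseteq\{1,\ldots,m\}^3$. It is totally symmetric if this set is invariant under all permutations of coordinates; $\mathrm{TSPP}_m$ denotes the set of these. For $T\in\mathrm{TSPP}_{n-1}$, $\mathrm{diag}(T)$ is the conjugate of the partition $(T_{1,1},\ldots,T_{n-1,n-1})$; if $\mathrm{diag}(T)=(a_1,\ldots,a_l\mid b_1,\ldots,b_l)$ then $\pi(T)$ is the partition with Frobenius notation $(a_1,\ldots,a_l\mid b_1+1,\ldots,b_l+1)$. *)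

theory Defs
  imports Main
begin

(* Partitions are functions nat => nat, 1-indexed: mu i is the i-th part (i >= 1).
   Convention: mu 0 = 0; parts weakly decreasing; finitely many nonzero parts. *)
definition is_partition :: "(nat \<Rightarrow> nat) \<Rightarrow> bool" where
  "is_partition mu \<longleftrightarrow> mu 0 = 0 \<and> (\<forall>i j. 1 \<le> i \<and> i \<le> j \<longrightarrow> mu j \<le> mu i)
     \<and> (\<exists>N. \<forall>i>N. mu i = 0)"

definition conj_part :: "(nat \<Rightarrow> nat) \<Rightarrow> nat \<Rightarrow> nat" where
  "conj_part mu j = (if j = 0 then 0 else card {i. 1 \<le> i \<and> j \<le> mu i})"

definition durfee :: "(nat \<Rightarrow> nat) \<Rightarrow> nat" where
  "durfee mu = Max (insert 0 {i. 1 \<le> i \<and> i \<le> mu i})"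

definition frobenius :: "(nat \<Rightarrow> nat) \<Rightarrow> nat list \<times> nat list" where
  "frobenius mu = (map (\<lambda>i. mu i - i) [1..<durfee mu + 1],
                   map (\<lambda>i. conj_part mu i - i) [1..<durfee mu + 1])"

definition modified_balanced :: "nat \<Rightarrow> (nat \<Rightarrow> nat) \<Rightarrow> bool" where
  "modified_balanced n lam \<longleftrightarrow> is_partition lam \<and> (\<forall>i>n. lam i = 0) \<and> lam 1 \<le> n - 1
     \<and> (\<forall>i\<ge>1. i \<le> lam i \<longrightarrow> lam i < conj_part lam i)"

(* plane partitions in an (m,m,m)-box: arrays T i j, 1 <= i,j <= m (0 outside) *)
definition pp_set :: "nat \<Rightarrow> (nat \<Rightarrow> nat \<Rightarrow> nat) \<Rightarrow> (nat \<times> nat \<times> nat) set" where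
  "pp_set m T = {(i,j,k). 1 \<le> i \<and> i \<le> m \<and> 1 \<le> j \<and> j \<le> m \<and> 1 \<le> k \<and> k \<le> T i j}"

definition plane_partition_box :: "nat \<Rightarrow> (nat \<Rightarrow> nat \<Rightarrow> nat) \<Rightarrow> bool" where
  "plane_partition_box m T \<longleftrightarrow>
     (\<forall>i j. \<not> (1 \<le> i \<and> i \<le> m \<and> 1 \<le> j \<and> j \<le> m) \<longrightarrow> T i j = 0)
     \<and> (\<forall>i j. T i j \<le> m)
     \<and> (\<forall>i j j'. 1 \<le> i \<and> i \<le> m \<and> 1 \<le> j \<and> j \<le> j' \<and> j' \<le> m \<longrightarrow> T i j' \<le> T i j)
     \<and> (\<forall>i i' j. 1 \<le> i \<and> i \<le> i' \<and> i' \<le> m \<and> 1 \<le> j \<and> j \<le> m \<longrightarrow> T i' j \<le> T i j)"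

definition totally_symmetric :: "(nat \<times> nat \<times> nat) set \<Rightarrow> bool" where
  "totally_symmetric S \<longleftrightarrow> (\<forall>i j k. (i,j,k) \<in> S \<longrightarrow>
      (j,i,k) \<in> S \<and> (i,k,j) \<in> S \<and> (k,j,i) \<in> S \<and> (j,k,i) \<in> S \<and> (k,i,j) \<in> S)"

definition TSPP :: "nat \<Rightarrow> (nat \<Rightarrow> nat \<Rightarrow> nat) set" where
  "TSPP m = {T. plane_partition_box m T \<and> totally_symmetric (pp_set m T)}"

definition diag_part :: "nat \<Rightarrow> (nat \<Rightarrow> nat \<Rightarrow> nat) \<Rightarrow> nat \<Rightarrow> nat" where
  "diag_part n T = conj_part (\<lambda>i. if 1 \<le> i \<and> i \<le> n - 1 then T i i else 0)"

definition pi_part :: "nat \<Rightarrow> (nat \<Rightarrow> nat \<Rightarrow> nat) \<Rightarrow> nat \<Rightarrow> nat" where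
  "pi_part n T = (THE nu. is_partition nu \<and>
      frobenius nu = (fst (frobenius (diag_part n T)), map Suc (snd (frobenius (diag_part n T)))))"

end

theory Submission
  imports Defs
begin

text \<open>Write \<open>d\<close> for the diagonal \<open>(T\<^sub>1\<^sub>1, T\<^sub>2\<^sub>2, \<dots>)\<close> and \<open>\<mu> = d'\<close> for \<open>diag(T)\<close>, with
  Durfee side \<open>l\<close>. Adding one cell at the foot of each of the first \<open>l\<close> columns of \<open>\<mu>\<close> keeps
  its first \<open>l\<close> rows and its Durfee square and raises the first \<open>l\<close> legs by one, so it produces
  \<open>\<pi>(T)\<close>. The balance condition for \<open>\<pi>(T)\<close> thus amounts to \<open>\<mu>\<^sub>i \<le> \<mu>'\<^sub>i = T\<^sub>i\<^sub>i\<close> for \<open>i \<le> l\<close>.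
  With \<open>k = \<mu>\<^sub>i \<ge> i\<close> we have \<open>T\<^sub>k\<^sub>k \<ge> i\<close>, i.e. \<open>(k,k,i) \<in> T\<close>; by total symmetry
  \<open>(i,k,k) \<in> T\<close>, so \<open>T\<^sub>i\<^sub>i \<ge> T\<^sub>i\<^sub>k \<ge> k\<close>. The size bounds come from the box.\<close>

section \<open>Partitions and their conjugates\<close>

lemma is_partition_mono: "is_partition p \<Longrightarrow> 1 \<le> i \<Longrightarrow> i \<le> j \<Longrightarrow> p j \<le> p i"
  unfolding is_partition_def by blast

lemma conj_part_eq_0:
  assumes "\<And>i. p i < j"
  shows "conj_part p j = 0"
proof -
  have empty: "{i. 1 \<le> i \<and> j \<le> p i} = {}" using assms leD by blast
  show ?thesis unfolding conj_part_def empty by simp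
qed

lemma conj_part_le_support:
  assumes "\<And>i. N < i \<Longrightarrow> p i = 0"
  shows "conj_part p j \<le> N"
proof (cases "j = 0")
  case False
  then have "{i. 1 \<le> i \<and> j \<le> p i} \<subseteq> {1..N}"
    using assms by (force simp: not_less[symmetric])
  then have "card {i. 1 \<le> i \<and> j \<le> p i} \<le> card {1..N}"
    by (intro card_mono) auto
  then show ?thesis using False by (simp add: conj_part_def)
qed (simp add: conj_part_def)

lemma finite_rows_ge:
  assumes "is_partition p" and "1 \<le> j"
  shows "finite {i. 1 \<le> i \<and> j \<le> p i}"
proof -
  obtain N where "\<forall>i>N. p i = 0" using assms(1) unfolding is_partition_def by blast
  then have "{i. 1 \<le> i \<and> j \<le> p i} \<subseteq> {..N}"
    using assms(2) by (force simp: not_less[symmetric])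
  then show ?thesis using finite_subset by blast
qed

lemma le_conj_part_iff:
  assumes p: "is_partition p" and i: "1 \<le> i" and j: "1 \<le> j"
  shows "i \<le> conj_part p j \<longleftrightarrow> j \<le> p i"
proof -
  let ?S = "{i. 1 \<le> i \<and> j \<le> p i}"
  have card_S: "conj_part p j = card ?S" using j by (simp add: conj_part_def)
  have fin: "finite ?S" using finite_rows_ge[OF p j] .
  show ?thesis
  proof
    assume "i \<le> conj_part p j"
    show "j \<le> p i"
    proof (rule ccontr)
      assume "\<not> j \<le> p i"
      have "?S \<subseteq> {1..<i}"
      proof
        fix k assume k: "k \<in> ?S"
        then have "\<not> i \<le> k" using is_partition_mono[OF p i, of k] \<open>\<not> j \<le> p i\<close> by auto
        then show "k \<in> {1..<i}" using k by simp
      qed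
      then have "card ?S \<le> card {1..<i}" by (intro card_mono) auto
      with \<open>i \<le> conj_part p j\<close> card_S i show False by simp
    qed
  next
    assume "j \<le> p i"
    then have "{1..i} \<subseteq> ?S" using is_partition_mono[OF p] by (auto intro: le_trans)
    then have "card {1..i} \<le> card ?S" using fin card_mono by blast
    then show "i \<le> conj_part p j" using card_S by simp
  qed
qed

lemma is_partition_conj_part:
  assumes p: "is_partition p"
  shows "is_partition (conj_part p)"
  unfolding is_partition_def
proof (intro conjI allI impI exI)
  show "conj_part p 0 = 0" by (simp add: conj_part_def)
  fix i j :: nat assume ij: "1 \<le> i \<and> i \<le> j"
  then have "{k. 1 \<le> k \<and> j \<le> p k} \<subseteq> {k. 1 \<le> k \<and> i \<le> p k}" by auto
  then show "conj_part p j \<le> conj_part p i"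
    using ij finite_rows_ge[OF p, of i] card_mono by (simp add: conj_part_def)
next
  fix j assume "p 1 < j"
  moreover have "p i \<le> p 1" for i
    using is_partition_mono[OF p, of 1 i] p by (cases "i = 0") (auto simp: is_partition_def)
  ultimately show "conj_part p j = 0" by (intro conj_part_eq_0) (rule le_less_trans)
qed

lemma conj_part_conj_part:
  assumes p: "is_partition p"
  shows "conj_part (conj_part p) = p"
proof
  fix j
  show "conj_part (conj_part p) j = p j"
  proof (cases "j = 0")
    case True
    then show ?thesis using p by (simp add: conj_part_def is_partition_def)
  next
    case False
    then have "{i. 1 \<le> i \<and> j \<le> conj_part p i} = {1..p j}"
      using le_conj_part_iff[OF p] by auto
    then show ?thesis using False by (simp add: conj_part_def)
  qed
qed

section \<open>The Durfee square\<close>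

lemma le_durfee_iff:
  assumes p: "is_partition p" and i: "1 \<le> i"
  shows "i \<le> durfee p \<longleftrightarrow> i \<le> p i"
proof -
  let ?D = "{i. 1 \<le> i \<and> i \<le> p i}"
  have "?D \<subseteq> {i. 1 \<le> i \<and> 1 \<le> p i}" by auto
  then have fin: "finite ?D" using finite_rows_ge[OF p, of 1] finite_subset by auto
  show ?thesis
  proof
    assume le: "i \<le> durfee p"
    have "Max (insert 0 ?D) \<in> insert 0 ?D" using fin by (intro Max_in) auto
    moreover have "Max (insert 0 ?D) \<noteq> 0" using le i by (simp add: durfee_def)
    ultimately have "Max (insert 0 ?D) \<in> ?D" by auto
    then show "i \<le> p i"
      using le is_partition_mono[OF p i, of "Max (insert 0 ?D)"] unfolding durfee_def by auto
  next
    assume "i \<le> p i"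
    then show "i \<le> durfee p" using fin i unfolding durfee_def by (intro Max_ge) auto
  qed
qed

lemma durfee_eqI:
  assumes p: "is_partition p" and l: "\<And>i. 1 \<le> i \<Longrightarrow> i \<le> l \<longleftrightarrow> i \<le> p i"
  shows "durfee p = l"
  using le_durfee_iff[OF p, of l] le_durfee_iff[OF p, of "durfee p"] l[of l] l[of "durfee p"]
  by (cases "l = 0"; cases "durfee p = 0") auto

lemma durfee_conj_part:
  assumes p: "is_partition p"
  shows "durfee (conj_part p) = durfee p"
  using le_durfee_iff[OF p] le_conj_part_iff[OF p]
  by (intro durfee_eqI[OF is_partition_conj_part[OF p]]) auto

lemma le_below_durfee:
  assumes p: "is_partition p" and i: "durfee p < i"
  shows "p i \<le> durfee p"
proof (rule ccontr)
  assume "\<not> p i \<le> durfee p"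
  then have "Suc (durfee p) \<le> p i" by simp
  also have "p i \<le> p (Suc (durfee p))" using is_partition_mono[OF p, of "Suc (durfee p)" i] i by simp
  finally show False using le_durfee_iff[OF p, of "Suc (durfee p)"] by simp
qed

lemma durfee_le_conj_part:
  assumes p: "is_partition p" and j: "1 \<le> j" "j \<le> durfee p"
  shows "durfee p \<le> conj_part p j"
  using le_conj_part_iff[OF p _ j(1), of "durfee p"] le_durfee_iff[OF p, of "durfee p"] j by simp

section \<open>Frobenius notation\<close>

text \<open>Below the Durfee square every row is at most \<open>l\<close>, so it is recovered from the first \<open>l\<close> legs.\<close>
lemma part_eq_card_legs:
  assumes p: "is_partition p" and i: "1 \<le> i" and l: "p i \<le> l"
  shows "p i = card {j. 1 \<le> j \<and> j \<le> l \<and> i \<le> conj_part p j}"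
proof -
  have "p i = conj_part (conj_part p) i" using conj_part_conj_part[OF p] by simp
  also have "\<dots> = card {j. 1 \<le> j \<and> i \<le> conj_part p j}" using i by (simp add: conj_part_def)
  also have "{j. 1 \<le> j \<and> i \<le> conj_part p j} = {j. 1 \<le> j \<and> j \<le> l \<and> i \<le> conj_part p j}"
    using le_conj_part_iff[OF p i] l by (auto intro: le_trans)
  finally show ?thesis .
qed

lemma frobenius_inj:
  assumes p: "is_partition p" and q: "is_partition q" and eq: "frobenius p = frobenius q"
  shows "p = q"
proof -
  have arms: "map (\<lambda>i. p i - i) [1..<durfee p + 1] = map (\<lambda>i. q i - i) [1..<durfee q + 1]"
    and legs: "map (\<lambda>i. conj_part p i - i) [1..<durfee p + 1]
             = map (\<lambda>i. conj_part q i - i) [1..<durfee q + 1]"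
    using eq by (simp_all add: frobenius_def)
  define l where "l = durfee p"
  have l_q: "durfee q = l" using arg_cong[OF arms, of length] by (simp add: l_def del: upt_Suc)
  have square: "p i = q i \<and> conj_part p i = conj_part q i" if i: "1 \<le> i" "i \<le> l" for i
  proof -
    have "p i - i = q i - i" "conj_part p i - i = conj_part q i - i"
      using arms legs i l_q unfolding l_def map_eq_conv by auto
    moreover have "i \<le> p i" "i \<le> q i"
      using le_durfee_iff[OF p i(1)] le_durfee_iff[OF q i(1)] i l_q l_def by auto
    moreover have "i \<le> conj_part p i" "i \<le> conj_part q i"
      using le_conj_part_iff[OF p i(1) i(1)] le_conj_part_iff[OF q i(1) i(1)] calculation by auto
    ultimately show ?thesis by linarith
  qed
  show ?thesis
  proof
    fix i
    consider "i = 0" | "1 \<le> i" "i \<le> l" | "l < i" by linarith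
    then show "p i = q i"
    proof cases
      case 1
      then show ?thesis using p q by (simp add: is_partition_def)
    next
      case 2
      then show ?thesis using square by simp
    next
      case 3
      have "p i = card {j. 1 \<le> j \<and> j \<le> l \<and> i \<le> conj_part p j}"
        using part_eq_card_legs[OF p] le_below_durfee[OF p] 3 l_def by simp
      also have "\<dots> = card {j. 1 \<le> j \<and> j \<le> l \<and> i \<le> conj_part q j}"
        using square by (metis (no_types, lifting))
      also have "\<dots> = q i"
        using part_eq_card_legs[OF q] le_below_durfee[OF q] 3 l_q by simp
      finally show ?thesis .
    qed
  qed
qed

section \<open>Lengthening the legs of the Durfee square\<close>

definition conj_leg_shift :: "(nat \<Rightarrow> nat) \<Rightarrow> nat \<Rightarrow> nat" where
  "conj_leg_shift mu j =
     (if 1 \<le> j \<and> j \<le> durfee mu then Suc (conj_part mu j) else conj_part mu j)"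

definition leg_shift :: "(nat \<Rightarrow> nat) \<Rightarrow> nat \<Rightarrow> nat" where
  "leg_shift mu = conj_part (conj_leg_shift mu)"

lemma is_partition_conj_leg_shift:
  assumes mu: "is_partition mu"
  shows "is_partition (conj_leg_shift mu)"
  unfolding is_partition_def
proof (intro conjI allI impI)
  let ?l = "durfee mu"
  have c: "is_partition (conj_part mu)" using is_partition_conj_part[OF mu] .
  show "conj_leg_shift mu 0 = 0" by (simp add: conj_leg_shift_def conj_part_def)
  fix i j :: nat assume ij: "1 \<le> i \<and> i \<le> j"
  have "conj_part mu j \<le> conj_part mu i" using is_partition_mono[OF c] ij by blast
  moreover have "conj_part mu j \<le> ?l" if "?l < j"
    using le_below_durfee[OF c] durfee_conj_part[OF mu] that by simp
  moreover have "?l \<le> conj_part mu i" if "i \<le> ?l"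
    using durfee_le_conj_part[OF mu _ that] ij by simp
  ultimately show "conj_leg_shift mu j \<le> conj_leg_shift mu i"
    using ij by (auto simp: conj_leg_shift_def)
next
  obtain N where "\<forall>i>N. conj_part mu i = 0"
    using is_partition_conj_part[OF mu] unfolding is_partition_def by blast
  then show "\<exists>N. \<forall>i>N. conj_leg_shift mu i = 0"
    by (intro exI[of _ "max N (durfee mu)"]) (simp add: conj_leg_shift_def)
qed

lemma conj_part_leg_shift:
  "is_partition mu \<Longrightarrow> conj_part (leg_shift mu) = conj_leg_shift mu"
  unfolding leg_shift_def by (rule conj_part_conj_part[OF is_partition_conj_leg_shift])

lemma is_partition_leg_shift: "is_partition mu \<Longrightarrow> is_partition (leg_shift mu)"
  unfolding leg_shift_def by (rule is_partition_conj_part[OF is_partition_conj_leg_shift])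

lemma leg_shift_eq:
  assumes mu: "is_partition mu" and i: "1 \<le> i" "i \<le> durfee mu"
  shows "leg_shift mu i = mu i"
proof -
  have "{j. 1 \<le> j \<and> i \<le> conj_leg_shift mu j} = {j. 1 \<le> j \<and> i \<le> conj_part mu j}"
    using durfee_le_conj_part[OF mu] i by (auto simp: conj_leg_shift_def intro: le_trans)
  then have "leg_shift mu i = conj_part (conj_part mu) i"
    using i by (simp add: leg_shift_def conj_part_def)
  then show ?thesis using conj_part_conj_part[OF mu] by simp
qed

lemma durfee_leg_shift:
  assumes mu: "is_partition mu"
  shows "durfee (leg_shift mu) = durfee mu"
proof -
  have "i \<le> durfee mu \<longleftrightarrow> i \<le> conj_leg_shift mu i" if "1 \<le> i" for i
    using le_durfee_iff[OF is_partition_conj_part[OF mu] that] durfee_conj_part[OF mu] that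
    by (auto simp: conj_leg_shift_def)
  then have "durfee (conj_leg_shift mu) = durfee mu"
    by (rule durfee_eqI[OF is_partition_conj_leg_shift[OF mu]])
  then show ?thesis
    unfolding leg_shift_def by (simp add: durfee_conj_part is_partition_conj_leg_shift mu)
qed

lemma frobenius_leg_shift:
  assumes mu: "is_partition mu"
  shows "frobenius (leg_shift mu) = (fst (frobenius mu), map Suc (snd (frobenius mu)))"
proof -
  have "i \<le> conj_part mu i" if "1 \<le> i" "i \<le> durfee mu" for i
    using le_conj_part_iff[OF mu that(1) that(1)] le_durfee_iff[OF mu that(1)] that by simp
  then show ?thesis
    unfolding frobenius_def durfee_leg_shift[OF mu] conj_part_leg_shift[OF mu]
    by (auto simp: leg_shift_eq[OF mu] conj_leg_shift_def Suc_diff_le)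
qed

lemma the_frobenius_leg_shift:
  assumes mu: "is_partition mu"
  shows "(THE nu. is_partition nu \<and> frobenius nu = (fst (frobenius mu), map Suc (snd (frobenius mu))))
           = leg_shift mu"
proof (rule the_equality)
  show "is_partition (leg_shift mu) \<and>
        frobenius (leg_shift mu) = (fst (frobenius mu), map Suc (snd (frobenius mu)))"
    using is_partition_leg_shift[OF mu] frobenius_leg_shift[OF mu] by simp
  fix nu assume "is_partition nu \<and> frobenius nu = (fst (frobenius mu), map Suc (snd (frobenius mu)))"
  then show "nu = leg_shift mu"
    using frobenius_inj[OF _ is_partition_leg_shift[OF mu]] frobenius_leg_shift[OF mu] by simp
qed

lemma leg_shift_1:
  assumes mu: "is_partition mu"
  shows "leg_shift mu 1 = mu 1"
proof (cases "durfee mu = 0")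
  case True
  then have "conj_leg_shift mu = conj_part mu" by (simp add: conj_leg_shift_def fun_eq_iff)
  then have "leg_shift mu = conj_part (conj_part mu)" by (simp add: leg_shift_def)
  then show ?thesis using conj_part_conj_part[OF mu] by simp
qed (simp add: leg_shift_eq[OF mu])

lemma leg_shift_vanishes:
  assumes legs: "\<And>j. conj_part mu j \<le> m" and i: "Suc m < i"
  shows "leg_shift mu i = 0"
proof -
  have "conj_leg_shift mu j \<le> Suc m" for j using legs[of j] by (simp add: conj_leg_shift_def)
  then show ?thesis unfolding leg_shift_def using i by (intro conj_part_eq_0) (rule le_less_trans)
qed

lemma leg_shift_balanced:
  assumes mu: "is_partition mu"
    and arm_le_leg: "\<And>i. 1 \<le> i \<Longrightarrow> i \<le> mu i \<Longrightarrow> mu i \<le> conj_part mu i"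
    and i: "1 \<le> i" "i \<le> leg_shift mu i"
  shows "leg_shift mu i < conj_part (leg_shift mu) i"
proof -
  have "i \<le> durfee mu"
    using le_durfee_iff[OF is_partition_leg_shift[OF mu] i(1)] durfee_leg_shift[OF mu] i(2) by simp
  then show ?thesis
    using leg_shift_eq[OF mu i(1)] arm_le_leg[OF i(1)] le_durfee_iff[OF mu i(1)] i(1)
    by (auto simp: conj_part_leg_shift[OF mu] conj_leg_shift_def)
qed

section \<open>The diagonal of a totally symmetric plane partition\<close>

lemma is_partition_box_diagonal:
  assumes box: "plane_partition_box m T"
  shows "is_partition (\<lambda>i. if 1 \<le> i \<and> i \<le> m then T i i else 0)"
proof -
  have "T j j \<le> T i i" if "1 \<le> i" "i \<le> j" "j \<le> m" for i j
  proof -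
    have "T j j \<le> T i j" using box that unfolding plane_partition_box_def by simp
    also have "\<dots> \<le> T i i" using box that unfolding plane_partition_box_def by simp
    finally show ?thesis .
  qed
  then show ?thesis unfolding is_partition_def by (auto intro!: exI[of _ m])
qed

lemma conj_part_diag_part:
  assumes "plane_partition_box (n - 1) T"
  shows "conj_part (diag_part n T) = (\<lambda>i. if 1 \<le> i \<and> i \<le> n - 1 then T i i else 0)"
  unfolding diag_part_def by (rule conj_part_conj_part[OF is_partition_box_diagonal[OF assms]])

lemma is_partition_diag_part:
  "plane_partition_box (n - 1) T \<Longrightarrow> is_partition (diag_part n T)"
  unfolding diag_part_def by (rule is_partition_conj_part[OF is_partition_box_diagonal])

lemma diag_part_arm_le_leg:
  assumes T: "T \<in> TSPP (n - 1)" and i: "1 \<le> i" "i \<le> diag_part n T i"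
  shows "diag_part n T i \<le> conj_part (diag_part n T) i"
proof -
  define m where "m = n - 1"
  define k where "k = diag_part n T i"
  have box: "plane_partition_box m T" and sym: "totally_symmetric (pp_set m T)"
    using T by (simp_all add: TSPP_def m_def)
  let ?d = "\<lambda>i. if 1 \<le> i \<and> i \<le> m then T i i else 0"
  have ik: "i \<le> k" using i k_def by simp
  have "i \<le> ?d k"
    using le_conj_part_iff[OF is_partition_box_diagonal[OF box] ik[THEN le_trans[OF i(1)]] i(1)]
    by (simp add: k_def diag_part_def m_def)
  then have km: "k \<le> m" and "i \<le> T k k" using i by (auto split: if_splits)
  then have "(k, k, i) \<in> pp_set m T" using ik i by (simp add: pp_set_def)
  then have "(i, k, k) \<in> pp_set m T" using sym unfolding totally_symmetric_def by blast
  then have "k \<le> T i k" by (simp add: pp_set_def)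
  also have "\<dots> \<le> T i i" using box i ik km unfolding plane_partition_box_def by simp
  finally show ?thesis
    using conj_part_diag_part box i ik km by (simp add: k_def m_def)
qed

theorem mainTheorem6:
  fixes n :: nat and T :: "nat \<Rightarrow> nat \<Rightarrow> nat"
  assumes "n \<ge> 1" and "T \<in> TSPP (n - 1)"
  shows "modified_balanced n (pi_part n T)"
proof -
  define mu where "mu = diag_part n T"
  have box: "plane_partition_box (n - 1) T" using assms(2) by (simp add: TSPP_def)
  have mu_part: "is_partition mu" using is_partition_diag_part[OF box] mu_def by simp
  have legs_le: "conj_part mu j \<le> n - 1" for j
    using conj_part_diag_part[OF box] box by (simp add: mu_def plane_partition_box_def)
  have pi: "pi_part n T = leg_shift mu"
    unfolding pi_part_def mu_def[symmetric] by (rule the_frobenius_leg_shift[OF mu_part])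
  have "mu 1 \<le> n - 1"
    unfolding mu_def diag_part_def by (rule conj_part_le_support) simp
  then show ?thesis
    unfolding modified_balanced_def pi
    using is_partition_leg_shift[OF mu_part] leg_shift_1[OF mu_part]
      leg_shift_vanishes[OF legs_le] assms(1)
      leg_shift_balanced[OF mu_part diag_part_arm_le_leg[OF assms(2), folded mu_def]]
    by auto
qed

end
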